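(* Let $p$ be a prime, $d \ge 0$ an integer, $G=(\mathbb{Z}/p\mathbb{Z})^d$, and let $t, r$ be integers with $0 \leq t \leq d$, $p^t < r \leq p^{t+1}$ (and $r \le p^d$, so that $\rho_G^-(r)$ is defined). Then \[\rho_G^-(r) \leq p^t \min\left\{ 2\left\lceil\frac{r}{p^t}\right\rceil - 1,\ p\right\}.\]
   Context: For a finite abelian group $(G,+)$ of order $N$ and subsets $A, B \subseteq G$, write $A - B = \{a - b \mid a \in A, b \in B\}$. For $1 \le r \le N$ define $\rho^-_G(r) = \min \{|A - A| \mid A \subseteq G, |A| = r\}$. *)

theory Defs
  imports "HOL-Computational_Algebra.Primes" Complex_Main
begin

text \<open>Model of G = (Z/pZ)^d: functions nat => int supported on {0..<d}
  with values in {0..<p}; the group operation is componentwise mod p.\<close>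

definition zpd :: "nat \<Rightarrow> nat \<Rightarrow> (nat \<Rightarrow> int) set" where
  "zpd p d = {v. (\<forall>i<d. 0 \<le> v i \<and> v i < int p) \<and> (\<forall>i\<ge>d. v i = 0)}"

definition zpd_sub :: "nat \<Rightarrow> nat \<Rightarrow> (nat \<Rightarrow> int) \<Rightarrow> (nat \<Rightarrow> int) \<Rightarrow> (nat \<Rightarrow> int)" where
  "zpd_sub p d u v = (\<lambda>i. if i < d then (u i - v i) mod int p else 0)"

definition zpd_diffset :: "nat \<Rightarrow> nat \<Rightarrow> (nat \<Rightarrow> int) set \<Rightarrow> (nat \<Rightarrow> int) set" where
  "zpd_diffset p d A = {zpd_sub p d a b | a b. a \<in> A \<and> b \<in> A}"

definition rho_minus :: "nat \<Rightarrow> nat \<Rightarrow> nat \<Rightarrow> nat" where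
  "rho_minus p d r = Min {card (zpd_diffset p d A) | A. A \<subseteq> zpd p d \<and> card A = r}"

end

theory Submission
  imports Defs "HOL-Library.FuncSet"
begin

text \<open>Choose \<open>A\<close> inside the box \<open>(\<int>/p\<int>)\<^sup>t \<times> {0, \<dots>, k - 1} \<times> 0\<close> with
  \<open>k = \<lceil>r / p\<^sup>t\<rceil>\<close>, which has \<open>p\<^sup>t k \<ge> r\<close> elements. All differences of elements
  of this box lie in \<open>(\<int>/p\<int>)\<^sup>t \<times> S \<times> 0\<close>, where \<open>S\<close> is the image of
  \<open>{-(k - 1), \<dots>, k - 1}\<close> modulo \<open>p\<close>, and \<open>|S| \<le> min (2k - 1) p\<close>.\<close>

lemma zpd_finite: "finite (zpd p d)"
proof -
  have "zpd p d \<subseteq> (\<lambda>f i. if i < d then f i else 0) ` PiE {0..<d} (\<lambda>_. {0..<int p})"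
  proof
    fix v assume v: "v \<in> zpd p d"
    then have "v = (\<lambda>i. if i < d then restrict v {0..<d} i else 0)"
      and "restrict v {0..<d} \<in> PiE {0..<d} (\<lambda>_. {0..<int p})"
      by (auto simp: zpd_def)
    then show "v \<in> (\<lambda>f i. if i < d then f i else 0) ` PiE {0..<d} (\<lambda>_. {0..<int p})"
      by blast
  qed
  then show ?thesis
    by (rule finite_subset) (auto intro: finite_PiE)
qed

lemma rho_minus_le_card_zpd_diffset:
  assumes "A \<subseteq> zpd p d" "card A = r"
  shows "rho_minus p d r \<le> card (zpd_diffset p d A)"
proof -
  have "{card (zpd_diffset p d A) | A. A \<subseteq> zpd p d \<and> card A = r}
          \<subseteq> (\<lambda>A. card (zpd_diffset p d A)) ` Pow (zpd p d)"
    by blast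
  then have "finite {card (zpd_diffset p d A) | A. A \<subseteq> zpd p d \<and> card A = r}"
    using zpd_finite by (meson finite_Pow_iff finite_imageI finite_subset)
  then show ?thesis
    unfolding rho_minus_def by (rule Min_le) (use assms in blast)
qed

definition cylinder :: "nat \<Rightarrow> nat \<Rightarrow> int set \<Rightarrow> (nat \<Rightarrow> int) set" where
  "cylinder p t X = {v. (\<forall>i<t. v i \<in> {0..<int p}) \<and> v t \<in> X \<and> (\<forall>i>t. v i = 0)}"

lemma card_cylinder:
  assumes "finite X"
  shows "card (cylinder p t X) = p ^ t * card X"
proof -
  define glue :: "(nat \<Rightarrow> int) \<times> int \<Rightarrow> nat \<Rightarrow> int" where
    "glue = (\<lambda>(f, x) i. if i < t then f i else if i = t then x else 0)"
  define F where "F = PiE {0..<t} (\<lambda>_. {0..<int p})"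
  have "inj_on glue (F \<times> X)"
  proof (rule inj_onI)
    fix a b assume a: "a \<in> F \<times> X" and b: "b \<in> F \<times> X" and eq: "glue a = glue b"
    obtain f x g y where ab: "a = (f, x)" "b = (g, y)" by fastforce
    have pointwise: "glue (f, x) i = glue (g, y) i" for i
      using eq ab by simp
    have "f i = g i" for i
      using pointwise[of i] a b ab
      by (cases "i < t") (auto simp: glue_def F_def PiE_def extensional_def)
    then show "a = b" using pointwise[of t] ab by (auto simp: glue_def)
  qed
  moreover have "glue ` (F \<times> X) = cylinder p t X"
  proof (intro equalityI subsetI)
    fix v assume "v \<in> cylinder p t X"
    then have "v = glue (restrict v {0..<t}, v t)" "(restrict v {0..<t}, v t) \<in> F \<times> X"
      by (auto simp: cylinder_def glue_def F_def)
    then show "v \<in> glue ` (F \<times> X)" by blast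
  qed (auto simp: cylinder_def glue_def F_def)
  moreover have "card F = p ^ t"
    by (simp add: F_def card_PiE)
  ultimately show ?thesis
    using assms by (metis card_image card_cartesian_product)
qed

lemma cylinder_subset_zpd:
  assumes "t < d" "X \<subseteq> {0..<int p}"
  shows "cylinder p t X \<subseteq> zpd p d"
proof
  fix v assume v: "v \<in> cylinder p t X"
  have "0 \<le> v i \<and> v i < int p" for i
    using v assms(2) by (cases i t rule: linorder_cases) (auto simp: cylinder_def)
  then show "v \<in> zpd p d"
    using v assms(1) by (simp add: zpd_def cylinder_def)
qed

lemma zpd_diffset_cylinder:
  assumes "p > 0" "t < d" "A \<subseteq> cylinder p t {0..<int k}"
  shows "zpd_diffset p d A \<subseteq> cylinder p t ((\<lambda>z. z mod int p) ` {-(int k - 1)..int k - 1})"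
proof
  fix w assume "w \<in> zpd_diffset p d A"
  then obtain a b where "a \<in> A" "b \<in> A" and w: "w = zpd_sub p d a b"
    by (auto simp: zpd_diffset_def)
  then have ab: "a \<in> cylinder p t {0..<int k}" "b \<in> cylinder p t {0..<int k}"
    using assms(3) by auto
  then have "a t - b t \<in> {-(int k - 1)..int k - 1}"
    by (auto simp: cylinder_def)
  then show "w \<in> cylinder p t ((\<lambda>z. z mod int p) ` {-(int k - 1)..int k - 1})"
    using assms(1,2) ab by (auto simp: w zpd_sub_def cylinder_def)
qed

lemma card_residues_of_interval:
  assumes "p > 0" "k \<ge> 1"
  shows "card ((\<lambda>z. z mod int p) ` {-(int k - 1)..int k - 1}) \<le> min (2 * k - 1) p"
proof -
  have "card ((\<lambda>z. z mod int p) ` {-(int k - 1)..int k - 1}) \<le> card {-(int k - 1)..int k - 1}"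
    by (rule card_image_le) simp
  moreover have "card ((\<lambda>z. z mod int p) ` {-(int k - 1)..int k - 1}) \<le> card {0..<int p}"
    using assms(1) by (intro card_mono) auto
  ultimately show ?thesis
    using assms(2) by simp
qed

lemma rho_minus_le_cylinder_bound:
  assumes "p > 0" "t < d" "1 \<le> k" "k \<le> p" "r \<le> p ^ t * k"
  shows "rho_minus p d r \<le> p ^ t * min (2 * k - 1) p"
proof -
  let ?C = "cylinder p t {0..<int k}"
  let ?S = "(\<lambda>z. z mod int p) ` {-(int k - 1)..int k - 1}"
  obtain A where A: "A \<subseteq> ?C" "card A = r"
    using obtain_subset_with_card_n[of r ?C] assms(5) card_cylinder[of "{0..<int k}" p t] by auto
  have "A \<subseteq> zpd p d"
    using A(1) cylinder_subset_zpd[of t d "{0..<int k}" p] assms(2,4) by auto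
  then have "rho_minus p d r \<le> card (zpd_diffset p d A)"
    using A(2) by (rule rho_minus_le_card_zpd_diffset)
  also have "\<dots> \<le> card (cylinder p t ?S)"
  proof (rule card_mono)
    have "?S \<subseteq> {0..<int p}"
      using assms(1) by auto
    then show "finite (cylinder p t ?S)"
      by (rule finite_subset[OF cylinder_subset_zpd[OF assms(2)] zpd_finite])
  qed (rule zpd_diffset_cylinder[OF assms(1,2) A(1)])
  also have "\<dots> \<le> p ^ t * min (2 * k - 1) p"
    using card_cylinder[of ?S p t] card_residues_of_interval[OF assms(1,3)] by simp
  finally show ?thesis .
qed

theorem mainTheorem5:
  fixes p d t r :: nat
  assumes "prime p" and "t \<le> d" and "p ^ t < r" and "r \<le> p ^ (t + 1)" and "r \<le> p ^ d"
  shows "int (rho_minus p d r)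
           \<le> int (p ^ t) * min (2 * \<lceil>real r / real (p ^ t)\<rceil> - 1) (int p)"
proof -
  have "p > 1"
    using assms(1) prime_gt_1_nat by blast
  have "t < d"
    using assms(2,3,5) by (cases "t = d") auto
  define c where "c = \<lceil>real r / real (p ^ t)\<rceil>"
  have "real r \<le> real p * real (p ^ t)"
    using assms(4) by (metis of_nat_le_iff of_nat_mult power_Suc Suc_eq_plus1)
  then have "real r / real (p ^ t) \<le> real p"
    using \<open>p > 1\<close> by (simp add: divide_le_eq)
  then have "1 \<le> c" "c \<le> int p"
    using assms(3) \<open>p > 1\<close> by (auto simp: c_def ceiling_le_iff one_le_ceiling)
  moreover have "r \<le> p ^ t * nat c"
  proof -
    have "real r / real (p ^ t) \<le> real_of_int c"
      unfolding c_def by (rule le_of_int_ceiling)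
    then have "real r \<le> real (p ^ t) * real_of_int c"
      using \<open>p > 1\<close> by (simp add: divide_le_eq mult.commute)
    then have "real r \<le> real (p ^ t * nat c)"
      using \<open>1 \<le> c\<close> by simp
    then show ?thesis
      by (simp only: of_nat_le_iff)
  qed
  ultimately have "rho_minus p d r \<le> p ^ t * min (2 * nat c - 1) p"
    using rho_minus_le_cylinder_bound[of p t d "nat c" r] \<open>p > 1\<close> \<open>t < d\<close> by simp
  moreover have "int (min (2 * nat c - 1) p) = min (2 * c - 1) (int p)"
    using \<open>1 \<le> c\<close> by linarith
  ultimately show ?thesis
    unfolding c_def[symmetric] by (metis of_nat_le_iff of_nat_mult)
qed

end
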